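(* Let $P(z^1,\dots,z^d)$ be a polynomial in $d$ variables with real coefficients. The $N\times N$ matrix $P(W^{(1)},\dots,W^{(d)})$ has full rank $N$ if and only if the constant term of $P$ is nonzero.
   Context: For $k=1,\dots,d$, $a_k=x^k_0<\dots<x^k_{n_k}=b_k$ is a partition of $[a_k,b_k]$ with $n_k\ge1$, $l^k_j$ its Lagrange basis polynomials, and $\hat Z^{(k)}$ the $(n_k+1)\times(n_k+1)$ matrix with $\hat Z^{(k)}_{j,i}=(l^k_i)'(x^k_j)$. $N=(n_1+1)\cdots(n_d+1)$ and $W^{(\alpha)}=I_{n_1+1}\otimes\dots\otimes I_{n_{\alpha-1}+1}\otimes\hat Z^{(\alpha)}\otimes I_{n_{\alpha+1}+1}\otimes\dots\otimes I_{n_d+1}$ (these matrices pairwise commute, so $P(W^{(1)},\dots,W^{(d)})$ is well defined, the constant term being multiplied by the $N\times N$ identity). *)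

theory Defs
  imports "Jordan_Normal_Form.DL_Rank" "HOL-Library.Poly_Mapping"
    "HOL-Computational_Algebra.Polynomial"
begin

definition lagrange_basis :: "(nat \<Rightarrow> real) \<Rightarrow> nat \<Rightarrow> nat \<Rightarrow> real poly" where
  "lagrange_basis x n i =
     (\<Prod>m\<in>{0..n} - {i}. Polynomial.smult (inverse (x i - x m)) [:- x m, 1:])"

definition Zhat :: "(nat \<Rightarrow> real) \<Rightarrow> nat \<Rightarrow> real mat" where
  "Zhat x n = mat (n + 1) (n + 1)
     (\<lambda>(j, i). poly (pderiv (lagrange_basis x n i)) (x j))"

definition kron :: "real mat \<Rightarrow> real mat \<Rightarrow> real mat" where
  "kron A B = mat (dim_row A * dim_row B) (dim_col A * dim_col B)
     (\<lambda>(i, j). A $$ (i div dim_row B, j div dim_col B) * B $$ (i mod dim_row B, j mod dim_col B))"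

definition kron_list :: "real mat list \<Rightarrow> real mat" where
  "kron_list Ms = foldr kron Ms (1\<^sub>m 1)"

definition Wmat :: "nat \<Rightarrow> (nat \<Rightarrow> nat) \<Rightarrow> (nat \<Rightarrow> nat \<Rightarrow> real) \<Rightarrow> nat \<Rightarrow> real mat" where
  "Wmat d n x \<alpha> = kron_list
     (map (\<lambda>k. if k = \<alpha> then Zhat (x k) (n k) else 1\<^sub>m (n k + 1)) [1..<d + 1])"

definition mat_prod_list :: "nat \<Rightarrow> real mat list \<Rightarrow> real mat" where
  "mat_prod_list N Ms = foldr (*) Ms (1\<^sub>m N)"

text \<open>Polynomials in variables z^1..z^d: map from exponent vectors (nat =>0 nat)
  to real coefficients.\<close>
definition monoW :: "nat \<Rightarrow> (nat \<Rightarrow> nat) \<Rightarrow> (nat \<Rightarrow> nat \<Rightarrow> real)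
    \<Rightarrow> (nat \<Rightarrow>\<^sub>0 nat) \<Rightarrow> real mat" where
  "monoW d n x m = mat_prod_list (\<Prod>k\<in>{1..d}. n k + 1)
     (map (\<lambda>k. Wmat d n x k ^\<^sub>m Poly_Mapping.lookup m k) [1..<d + 1])"

definition eval_at_W :: "nat \<Rightarrow> (nat \<Rightarrow> nat) \<Rightarrow> (nat \<Rightarrow> nat \<Rightarrow> real)
    \<Rightarrow> ((nat \<Rightarrow>\<^sub>0 nat) \<Rightarrow>\<^sub>0 real) \<Rightarrow> real mat" where
  "eval_at_W d n x P =
     mat (\<Prod>k\<in>{1..d}. n k + 1) (\<Prod>k\<in>{1..d}. n k + 1)
       (\<lambda>(i, j). \<Sum>m\<in>Poly_Mapping.keys P. Poly_Mapping.lookup P m * monoW d n x m $$ (i, j))"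

end

theory Submission
  imports Defs
begin

text \<open>
  In the monomial basis $1, z, \dots, z^n$ the differentiation operator on
  polynomials of degree at most $n$ is the strictly upper triangular matrix
  \<open>deriv_mat n\<close>.  Since the Lagrange basis interpolates monomials exactly, the
  Vandermonde matrix $V$ of the nodes satisfies $\hat Z V = V D$.  Taking Kronecker
  products, the invertible matrix $K = V^{(1)} \otimes \dots \otimes V^{(d)}$
  intertwines every $W^{(\alpha)}$ with a Kronecker product $D^{(\alpha)}$ of identities
  and one differentiation matrix, which is again strictly upper triangular.  Hence
  $P(W) K = K\, P(D)$, and $P(D)$ is upper triangular with every diagonal entry equal to
  the constant term $c$ of $P$.  Therefore $\det P(W) = c^N$, and $P(W)$ has full rank
  iff $c \neq 0$.
\<close>

section \<open>Kronecker products of square matrices\<close>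

lemma sum_blocks:
  fixes f :: "nat \<Rightarrow> 'a::comm_monoid_add"
  shows "(\<Sum>l<a*b. f l) = (\<Sum>p<a. \<Sum>q<b. f (p*b + q))"
proof -
  have shift: "sum f {m..<m+b} = (\<Sum>q<b. f (m+q))" for m
    by (induction b) (auto simp: add.commute)
  have "(\<Sum>l<a*b. f l) = (\<Sum>p<a. sum f {p*b..<p*b+b})"
    by (rule sum.nat_group[symmetric])
  then show ?thesis by (simp add: shift)
qed

lemma kron_index_split: "i < a*b \<Longrightarrow> i div b < a \<and> i mod b < (b::nat)"
  by (cases b) (auto simp: less_mult_imp_div_less)

lemma kron_carrier:
  "A \<in> carrier_mat a a \<Longrightarrow> B \<in> carrier_mat b b \<Longrightarrow> kron A B \<in> carrier_mat (a*b) (a*b)"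
  by (simp add: kron_def)

lemma kron_index:
  "A \<in> carrier_mat a a \<Longrightarrow> B \<in> carrier_mat b b \<Longrightarrow> i < a*b \<Longrightarrow> j < a*b \<Longrightarrow>
   kron A B $$ (i,j) = A $$ (i div b, j div b) * B $$ (i mod b, j mod b)"
  by (simp add: kron_def)

lemma kron_mult:
  assumes A: "A \<in> carrier_mat a a" and C: "C \<in> carrier_mat a a"
    and B: "B \<in> carrier_mat b b" and D: "D \<in> carrier_mat b b"
  shows "kron A B * kron C D = kron (A*C) (B*D)"
proof (rule eq_matI)
  fix i j assume "i < dim_row (kron (A*C) (B*D))" and "j < dim_col (kron (A*C) (B*D))"
  then have i: "i < a*b" and j: "j < a*b" using A B C D by (auto simp: kron_def)
  have block: "p*b + q < a*b" if "p < a" "q < b" for p q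
  proof -
    have "p*b + q < (p+1)*b" using that by simp
    also have "\<dots> \<le> a*b" using that by (intro mult_le_mono1) simp
    finally show ?thesis .
  qed
  have "(kron A B * kron C D) $$ (i,j) = (\<Sum>l<a*b. kron A B $$ (i,l) * kron C D $$ (l,j))"
    using A B C D i j by (simp add: kron_def scalar_prod_def atLeast0LessThan)
  also have "\<dots> = (\<Sum>p<a. \<Sum>q<b. kron A B $$ (i,p*b+q) * kron C D $$ (p*b+q,j))"
    by (rule sum_blocks)
  also have "\<dots> = (\<Sum>p<a. \<Sum>q<b. (A $$ (i div b, p) * C $$ (p, j div b)) *
                                    (B $$ (i mod b, q) * D $$ (q, j mod b)))"
    using kron_index[OF A B i block] kron_index[OF C D block j] by (intro sum.cong refl) simp
  also have "\<dots> = (\<Sum>p<a. A $$ (i div b, p) * C $$ (p, j div b)) *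
                  (\<Sum>q<b. B $$ (i mod b, q) * D $$ (q, j mod b))"
    by (simp add: sum_product)
  also have "\<dots> = kron (A*C) (B*D) $$ (i,j)"
    using A B C D i j kron_index_split[OF i] kron_index_split[OF j]
    by (simp add: kron_def scalar_prod_def atLeast0LessThan)
  finally show "(kron A B * kron C D) $$ (i,j) = kron (A*C) (B*D) $$ (i,j)" .
qed (use A B C D in \<open>simp_all add: kron_def\<close>)

lemma kron_one: "kron (1\<^sub>m a) (1\<^sub>m b) = 1\<^sub>m (a*b)"
proof (rule eq_matI)
  fix i j assume "i < dim_row (1\<^sub>m (a*b) :: real mat)" and "j < dim_col (1\<^sub>m (a*b) :: real mat)"
  then have i: "i < a*b" and j: "j < a*b" by auto
  moreover have "(i div b = j div b \<and> i mod b = j mod b) = (i = j)"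
    by (metis div_mult_mod_eq)
  ultimately show "kron (1\<^sub>m a) (1\<^sub>m b) $$ (i,j) = (1\<^sub>m (a*b) :: real mat) $$ (i,j)"
    using i j kron_index_split[OF i] kron_index_split[OF j] by (auto simp: kron_def)
qed (auto simp: kron_def)

text \<open>A Kronecker product of upper triangular matrices is upper triangular: the
  index order is lexicographic in (block, position inside the block).\<close>
lemma kron_upper_triangular:
  assumes A: "A \<in> carrier_mat a a" and B: "B \<in> carrier_mat b b"
    and "upper_triangular A" "upper_triangular B"
  shows "upper_triangular (kron A B)"
proof
  fix i j assume "i < dim_row (kron A B)" and ji: "j < i"
  then have i: "i < a*b" and j: "j < a*b" using A B by (auto simp: kron_def)
  have ij: "i div b < a" "j div b < a" "i mod b < b" "j mod b < b"
    using kron_index_split[OF i] kron_index_split[OF j] by auto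
  have "j div b \<le> i div b" using ji by (simp add: div_le_mono)
  then consider "j div b < i div b" | "j div b = i div b" "j mod b < i mod b"
    using ji by (metis div_mult_mod_eq le_neq_implies_less add_less_cancel_left)
  then show "kron A B $$ (i,j) = 0"
    using assms i j ij by cases (auto simp: kron_def upper_triangular_def)
qed

lemma kron_list_Cons: "kron_list (M # Ms) = kron M (kron_list Ms)"
  by (simp add: kron_list_def)

lemma kron_list_carrier:
  assumes "\<And>k. k \<in> set ks \<Longrightarrow> f k \<in> carrier_mat (s k) (s k)"
  shows "kron_list (map f ks) \<in> carrier_mat (prod_list (map s ks)) (prod_list (map s ks))"
  using assms by (induction ks) (auto simp: kron_list_def intro!: kron_carrier)

lemma kron_list_mult:
  assumes "\<And>k. k \<in> set ks \<Longrightarrow> f k \<in> carrier_mat (s k) (s k)"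
    and "\<And>k. k \<in> set ks \<Longrightarrow> g k \<in> carrier_mat (s k) (s k)"
  shows "kron_list (map f ks) * kron_list (map g ks) = kron_list (map (\<lambda>k. f k * g k) ks)"
  using assms
proof (induction ks)
  case Nil
  then show ?case by (simp add: kron_list_def)
next
  case (Cons k ks)
  then show ?case
    unfolding list.map kron_list_Cons
    by (subst kron_mult[OF _ _ kron_list_carrier kron_list_carrier]) auto
qed

lemma kron_list_one: "kron_list (map (\<lambda>k. 1\<^sub>m (s k)) ks) = 1\<^sub>m (prod_list (map s ks))"
  by (induction ks) (simp_all add: kron_list_def kron_one)

lemma kron_list_upper_triangular:
  assumes "\<And>k. k \<in> set ks \<Longrightarrow> f k \<in> carrier_mat (s k) (s k)"
    and "\<And>k. k \<in> set ks \<Longrightarrow> upper_triangular (f k)"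
  shows "upper_triangular (kron_list (map f ks))"
  using assms
proof (induction ks)
  case Nil
  then show ?case by (simp add: kron_list_def)
next
  case (Cons k ks)
  show ?case unfolding list.map kron_list_Cons
    by (rule kron_upper_triangular[OF _ kron_list_carrier]) (use Cons in auto)
qed

lemma kron_list_diag_zero:
  assumes "\<And>k. k \<in> set ks \<Longrightarrow> f k \<in> carrier_mat (s k) (s k)"
    and "k' \<in> set ks" and "\<And>i. i < s k' \<Longrightarrow> f k' $$ (i,i) = 0"
    and "i < prod_list (map s ks)"
  shows "kron_list (map f ks) $$ (i,i) = 0"
  using assms
proof (induction ks arbitrary: i)
  case Nil
  then show ?case by simp
next
  case (Cons k ks)
  let ?b = "prod_list (map s ks)"
  have i: "i < s k * ?b" using Cons.prems by simp
  then have ib: "i div ?b < s k" "i mod ?b < ?b"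
    using kron_index_split by auto
  have "kron_list (map f (k#ks)) $$ (i,i) =
        f k $$ (i div ?b, i div ?b) * kron_list (map f ks) $$ (i mod ?b, i mod ?b)"
    using kron_index[OF _ kron_list_carrier[of ks f s] i i] Cons.prems(1)
    by (simp add: kron_list_Cons)
  moreover have "f k $$ (i div ?b, i div ?b) = 0 \<or>
                 kron_list (map f ks) $$ (i mod ?b, i mod ?b) = 0"
    using Cons.IH[of "i mod ?b"] Cons.prems ib by (cases "k = k'") auto
  ultimately show ?case by auto
qed

lemma kron_list_det_nonzero:
  assumes "\<And>k. k \<in> set ks \<Longrightarrow> f k \<in> carrier_mat (s k) (s k)"
    and "\<And>k. k \<in> set ks \<Longrightarrow> det (f k) \<noteq> 0"
  shows "det (kron_list (map f ks)) \<noteq> 0"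
proof -
  have "\<exists>g. g \<in> carrier_mat (s k) (s k) \<and> f k * g = 1\<^sub>m (s k)" if k: "k \<in> set ks" for k
    using det_non_zero_imp_unit[OF assms(1,2)[OF k], of "()"]
    by (auto simp: Units_def ring_mat_def)
  then obtain g where g: "\<And>k. k \<in> set ks \<Longrightarrow> g k \<in> carrier_mat (s k) (s k) \<and> f k * g k = 1\<^sub>m (s k)"
    by metis
  let ?N = "prod_list (map s ks)"
  have "kron_list (map f ks) * kron_list (map g ks) = kron_list (map (\<lambda>k. 1\<^sub>m (s k)) ks)"
    using g by (subst kron_list_mult[of ks f s g]) (auto intro!: assms(1) arg_cong[where f = kron_list])
  then have "kron_list (map f ks) * kron_list (map g ks) = 1\<^sub>m ?N"
    by (simp add: kron_list_one)
  then have "det (kron_list (map f ks)) * det (kron_list (map g ks)) = 1"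
    using det_mult[OF kron_list_carrier[of ks f s] kron_list_carrier[of ks g s]] assms(1) g
    by auto
  then show ?thesis by auto
qed

section \<open>Products of upper triangular matrices\<close>

lemma upper_triangular_mult:
  fixes A B :: "'a::semiring_0 mat"
  assumes A: "A \<in> carrier_mat N N" and B: "B \<in> carrier_mat N N"
    and uA: "upper_triangular A" and uB: "upper_triangular B"
  shows "upper_triangular (A * B)"
    and "\<And>i. i < N \<Longrightarrow> (A * B) $$ (i,i) = A $$ (i,i) * B $$ (i,i)"
proof -
  have entry: "(A * B) $$ (i,j) = (\<Sum>l\<in>{0..<N}. A $$ (i,l) * B $$ (l,j))"
    if "i < N" "j < N" for i j
    using A B that by (simp add: scalar_prod_def)
  have vanish: "A $$ (i,l) * B $$ (l,j) = 0" if "i < N" "l < N" "l < i \<or> j < l" for i j l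
    using that uA uB A B by (auto simp: upper_triangular_def)
  show "upper_triangular (A * B)"
  proof
    fix i j assume "i < dim_row (A * B)" and ji: "j < i"
    then have i: "i < N" using A by simp
    then show "(A * B) $$ (i,j) = 0"
      using ji by (auto simp: entry intro!: sum.neutral vanish)
  qed
  fix i assume i: "i < N"
  have "(\<Sum>l\<in>{0..<N} - {i}. A $$ (i,l) * B $$ (l,i)) = 0"
    using i by (auto intro!: sum.neutral vanish)
  then have "(\<Sum>l\<in>{0..<N}. A $$ (i,l) * B $$ (l,i)) = A $$ (i,i) * B $$ (i,i)"
    using i by (subst sum.remove[of _ i]) auto
  then show "(A * B) $$ (i,i) = A $$ (i,i) * B $$ (i,i)" using entry[OF i i] by simp
qed

lemma upper_triangular_pow:
  fixes A :: "'a::semiring_1 mat"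
  assumes A: "A \<in> carrier_mat N N" and uA: "upper_triangular A"
  shows "upper_triangular (A ^\<^sub>m e) \<and> (\<forall>i<N. (A ^\<^sub>m e) $$ (i,i) = (A $$ (i,i)) ^ e)"
proof (induction e)
  case 0
  then show ?case using A by simp
next
  case (Suc e)
  have "A ^\<^sub>m e \<in> carrier_mat N N" using A by simp
  from upper_triangular_mult[OF this A] Suc uA show ?case by (simp add: power_Suc2[symmetric])
qed

lemma mat_prod_list_carrier:
  assumes "\<And>k. k \<in> set ks \<Longrightarrow> M k \<in> carrier_mat N N"
  shows "mat_prod_list N (map M ks) \<in> carrier_mat N N"
  using assms by (induction ks) (auto simp: mat_prod_list_def intro!: mult_carrier_mat)

lemma mat_prod_list_upper_triangular:
  assumes "\<And>k. k \<in> set ks \<Longrightarrow> M k \<in> carrier_mat N N"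
    and "\<And>k. k \<in> set ks \<Longrightarrow> upper_triangular (M k)"
  shows "upper_triangular (mat_prod_list N (map M ks)) \<and>
    (\<forall>i<N. mat_prod_list N (map M ks) $$ (i,i) = (\<Prod>k\<leftarrow>ks. M k $$ (i,i)))"
  using assms
proof (induction ks)
  case Nil
  then show ?case by (simp add: mat_prod_list_def)
next
  case (Cons k ks)
  have "mat_prod_list N (map M ks) \<in> carrier_mat N N"
    using Cons.prems by (intro mat_prod_list_carrier) auto
  from upper_triangular_mult[OF _ this] Cons show ?case
    by (simp add: mat_prod_list_def)
qed

lemma det_upper_triangular_const_diag:
  fixes A :: "'a::comm_ring_1 mat"
  assumes "A \<in> carrier_mat N N" "upper_triangular A" "\<And>i. i < N \<Longrightarrow> A $$ (i,i) = c"
  shows "det A = c ^ N"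
proof -
  have "diag_mat A = replicate N c"
    using assms by (intro nth_equalityI) (auto simp: diag_mat_def)
  then show ?thesis using det_upper_triangular[OF assms(2,1)] by simp
qed

section \<open>Polynomials evaluated at families of matrices\<close>

text \<open>The matrices are multiplied in the order of \<open>ks\<close>;
  this is the usual evaluation when they commute.\<close>
definition monomial_at :: "nat \<Rightarrow> (nat \<Rightarrow> real mat) \<Rightarrow> nat list \<Rightarrow> (nat \<Rightarrow>\<^sub>0 nat) \<Rightarrow> real mat"
  where "monomial_at N M ks m = mat_prod_list N (map (\<lambda>k. M k ^\<^sub>m Poly_Mapping.lookup m k) ks)"

definition poly_at :: "nat \<Rightarrow> (nat \<Rightarrow> real mat) \<Rightarrow> nat list \<Rightarrow> ((nat \<Rightarrow>\<^sub>0 nat) \<Rightarrow>\<^sub>0 real) \<Rightarrow> real mat"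
  where "poly_at N M ks P = mat N N (\<lambda>(i, j).
           \<Sum>m\<in>Poly_Mapping.keys P. Poly_Mapping.lookup P m * monomial_at N M ks m $$ (i, j))"

lemma monomial_at_carrier:
  assumes "\<And>k. k \<in> set ks \<Longrightarrow> M k \<in> carrier_mat N N"
  shows "monomial_at N M ks m \<in> carrier_mat N N"
  unfolding monomial_at_def by (rule mat_prod_list_carrier) (use assms in auto)

lemma intertwine_pow:
  fixes A B K :: "'a::semiring_1 mat"
  assumes A: "A \<in> carrier_mat N N" and B: "B \<in> carrier_mat N N" and K: "K \<in> carrier_mat N N"
    and AK: "A * K = K * B"
  shows "A ^\<^sub>m e * K = K * B ^\<^sub>m e"
proof (induction e)
  case 0
  then show ?case using A B K by simp
next
  case (Suc e)
  have "A ^\<^sub>m Suc e * K = A ^\<^sub>m e * (A * K)"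
    using A K by (simp add: assoc_mult_mat[of _ N N _ N _ N])
  also have "\<dots> = (A ^\<^sub>m e * K) * B"
    using A B K by (simp add: AK assoc_mult_mat[of _ N N _ N _ N])
  also have "\<dots> = K * B ^\<^sub>m Suc e"
    using B K by (simp add: Suc assoc_mult_mat[of _ N N _ N _ N])
  finally show ?case .
qed

lemma intertwine_mat_prod_list:
  assumes "\<And>k. k \<in> set ks \<Longrightarrow> A k \<in> carrier_mat N N"
    and "\<And>k. k \<in> set ks \<Longrightarrow> B k \<in> carrier_mat N N"
    and K: "K \<in> carrier_mat N N"
    and "\<And>k. k \<in> set ks \<Longrightarrow> A k * K = K * B k"
  shows "mat_prod_list N (map A ks) * K = K * mat_prod_list N (map B ks)"
  using assms(1,2,4)
proof (induction ks)
  case Nil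
  then show ?case using K by (simp add: mat_prod_list_def)
next
  case (Cons k ks)
  have PA: "mat_prod_list N (map A ks) \<in> carrier_mat N N"
    and PB: "mat_prod_list N (map B ks) \<in> carrier_mat N N"
    using Cons.prems by (auto intro!: mat_prod_list_carrier)
  have Ak: "A k \<in> carrier_mat N N" and Bk: "B k \<in> carrier_mat N N" using Cons.prems by auto
  have "mat_prod_list N (map A (k#ks)) * K = A k * (mat_prod_list N (map A ks) * K)"
    using PA Ak K by (simp add: mat_prod_list_def assoc_mult_mat[of _ N N _ N _ N])
  also have "\<dots> = A k * (K * mat_prod_list N (map B ks))"
    using Cons.IH Cons.prems by simp
  also have "\<dots> = (A k * K) * mat_prod_list N (map B ks)"
    using PB Ak K by (simp add: assoc_mult_mat[of _ N N _ N _ N])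
  also have "\<dots> = K * mat_prod_list N (map B (k#ks))"
    using Cons PB Bk K by (simp add: mat_prod_list_def assoc_mult_mat[of _ N N _ N _ N])
  finally show ?case .
qed

lemma intertwine_poly_at:
  assumes M: "\<And>k. k \<in> set ks \<Longrightarrow> M k \<in> carrier_mat N N"
    and M': "\<And>k. k \<in> set ks \<Longrightarrow> M' k \<in> carrier_mat N N"
    and K: "K \<in> carrier_mat N N"
    and MK: "\<And>k. k \<in> set ks \<Longrightarrow> M k * K = K * M' k"
  shows "poly_at N M ks P * K = K * poly_at N M' ks P"
proof (rule eq_matI)
  let ?c = "Poly_Mapping.lookup P" and ?S = "Poly_Mapping.keys P"
  have mono: "monomial_at N M ks m * K = K * monomial_at N M' ks m" for m
    unfolding monomial_at_def
    by (rule intertwine_mat_prod_list[OF _ _ K]) (auto intro: intertwine_pow M M' K MK simp: M M')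
  have dims: "dim_row (monomial_at N M ks m) = N" "dim_col (monomial_at N M ks m) = N"
    "dim_row (monomial_at N M' ks m) = N" "dim_col (monomial_at N M' ks m) = N" for m
    using monomial_at_carrier[of ks M N m] monomial_at_carrier[of ks M' N m] M M' by auto
  fix i j assume "i < dim_row (K * poly_at N M' ks P)" "j < dim_col (K * poly_at N M' ks P)"
  then have i: "i < N" and j: "j < N" using K by (auto simp: poly_at_def)
  have "(poly_at N M ks P * K) $$ (i,j) =
        (\<Sum>l\<in>{0..<N}. (\<Sum>m\<in>?S. ?c m * monomial_at N M ks m $$ (i,l)) * K $$ (l,j))"
    using i j K by (simp add: poly_at_def scalar_prod_def)
  also have "\<dots> = (\<Sum>m\<in>?S. ?c m * (monomial_at N M ks m * K) $$ (i,j))"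
    using i j K
    by (simp add: scalar_prod_def dims sum_distrib_left sum_distrib_right mult.assoc
        sum.swap[of _ "{0..<N}"])
  also have "\<dots> = (\<Sum>m\<in>?S. ?c m * (K * monomial_at N M' ks m) $$ (i,j))"
    by (simp add: mono)
  also have "\<dots> = (\<Sum>l\<in>{0..<N}. K $$ (i,l) * (\<Sum>m\<in>?S. ?c m * monomial_at N M' ks m $$ (l,j)))"
    using i j K
    by (simp add: scalar_prod_def dims sum_distrib_left mult.left_commute sum.swap[of _ "{0..<N}"])
  also have "\<dots> = (K * poly_at N M' ks P) $$ (i,j)"
    using i j K by (simp add: poly_at_def scalar_prod_def)
  finally show "(poly_at N M ks P * K) $$ (i,j) = (K * poly_at N M' ks P) $$ (i,j)" .
qed (use K in \<open>auto simp: poly_at_def\<close>)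

text \<open>At strictly upper triangular matrices, a polynomial in the variables \<open>ks\<close>
  evaluates to an upper triangular matrix whose diagonal is its constant term: every
  non-constant monomial contains a strictly upper triangular factor.\<close>
lemma poly_at_strictly_upper:
  assumes M: "\<And>k. k \<in> set ks \<Longrightarrow> M k \<in> carrier_mat N N"
    and uM: "\<And>k. k \<in> set ks \<Longrightarrow> upper_triangular (M k)"
    and dM: "\<And>k i. k \<in> set ks \<Longrightarrow> i < N \<Longrightarrow> M k $$ (i,i) = 0"
    and vars: "\<forall>m\<in>Poly_Mapping.keys P. Poly_Mapping.keys m \<subseteq> set ks"
  shows "upper_triangular (poly_at N M ks P)"
    and "\<And>i. i < N \<Longrightarrow> poly_at N M ks P $$ (i,i) = Poly_Mapping.lookup P 0"
proof -
  have mono: "upper_triangular (monomial_at N M ks m) \<and>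
      (\<forall>i<N. monomial_at N M ks m $$ (i,i) = (\<Prod>k\<leftarrow>ks. 0 ^ Poly_Mapping.lookup m k))" for m
  proof -
    have pow: "upper_triangular (M k ^\<^sub>m e) \<and> (\<forall>i<N. (M k ^\<^sub>m e) $$ (i,i) = 0 ^ e)"
      if "k \<in> set ks" for k e
      using upper_triangular_pow[OF M[OF that] uM[OF that], of e] dM[OF that] by auto
    show ?thesis
      using mat_prod_list_upper_triangular[of ks "\<lambda>k. M k ^\<^sub>m Poly_Mapping.lookup m k" N] M pow
      unfolding monomial_at_def by (auto intro!: arg_cong[where f = prod_list])
  qed
  have diag: "monomial_at N M ks m $$ (i,i) = (if m = 0 then 1 else 0)"
    if m: "m \<in> Poly_Mapping.keys P" and i: "i < N" for m i
  proof (cases "m = 0")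
    case True
    have "(\<Prod>k\<leftarrow>ks. 1) = (1::real)" by (induction ks) auto
    then show ?thesis using mono i True by simp
  next
    case False
    then obtain k where k: "k \<in> Poly_Mapping.keys m" by (metis all_not_in_conv keys_eq_empty)
    have "k \<in> set ks" using vars m k by blast
    moreover have "Poly_Mapping.lookup m k \<noteq> 0" using k by (simp add: in_keys_iff)
    ultimately show ?thesis using mono i False by (auto simp: prod_list_zero_iff)
  qed
  have "dim_row (monomial_at N M ks m) = N" for m
    using monomial_at_carrier[of ks M N m] M by auto
  then show "upper_triangular (poly_at N M ks P)"
    using mono
    by (auto simp: poly_at_def upper_triangular_def intro!: sum.neutral)
  fix i assume "i < N"
  then show "poly_at N M ks P $$ (i,i) = Poly_Mapping.lookup P 0"
    by (simp add: poly_at_def diag if_distrib[of "\<lambda>t. _ * t"] cong: if_cong) (simp add: in_keys_iff)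
qed

section \<open>Lagrange interpolation and the one-dimensional differentiation matrix\<close>

lemma nodes_strict_mono:
  assumes step: "\<forall>j<n. (xs :: nat \<Rightarrow> real) j < xs (Suc j)" and "i < j" "j \<le> n"
  shows "xs i < xs j"
  using assms(2,3)
proof (induction j)
  case 0
  then show ?case by simp
next
  case (Suc j)
  then have "xs j < xs (Suc j)" using step by simp
  moreover have "i = j \<or> xs i < xs j" using Suc by (auto simp: less_Suc_eq)
  ultimately show ?case by auto
qed

lemma nodes_inj:
  assumes "\<forall>j<n. (xs :: nat \<Rightarrow> real) j < xs (Suc j)"
  shows "inj_on xs {0..n}"
  by (rule inj_onI) (metis assms atLeastAtMost_iff less_irrefl nat_neq_iff nodes_strict_mono)

lemma poly_zero_at_nodes:
  assumes "\<forall>j<n. (xs :: nat \<Rightarrow> real) j < xs (Suc j)" "degree p \<le> n"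
    and "\<And>j. j \<le> n \<Longrightarrow> poly p (xs j) = 0"
  shows "p = 0"
proof (rule poly_eqI_degree[where A = "xs ` {0..n}"])
  have "card (xs ` {0..n}) = n + 1" using card_image[OF nodes_inj[OF assms(1)]] by simp
  then show "degree p < card (xs ` {0..n})" "degree (0::real poly) < card (xs ` {0..n})"
    using assms(2) by auto
qed (use assms(3) in auto)

lemma lagrange_basis_at_nodes:
  assumes "\<forall>j<n. (xs :: nat \<Rightarrow> real) j < xs (Suc j)" "i \<le> n" "j \<le> n"
  shows "poly (lagrange_basis xs n i) (xs j) = (if i = j then 1 else 0)"
proof -
  have eval: "poly (lagrange_basis xs n i) (xs j) =
              (\<Prod>m\<in>{0..n} - {i}. inverse (xs i - xs m) * (xs j - xs m))"
    unfolding lagrange_basis_def poly_prod by (simp add: algebra_simps)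
  show ?thesis
  proof (cases "i = j")
    case True
    have "xs i \<noteq> xs m" if "m \<in> {0..n} - {i}" for m
      using that nodes_inj[OF assms(1)] assms(2) by (auto dest: inj_onD)
    then show ?thesis using eval True by (simp add: prod.neutral)
  next
    case False
    then have "j \<in> {0..n} - {i}" using assms by auto
    then have "(\<Prod>m\<in>{0..n} - {i}. inverse (xs i - xs m) * (xs j - xs m)) = 0"
      by (intro prod_zero) auto
    then show ?thesis using eval False by simp
  qed
qed

text \<open>Each Lagrange basis polynomial is a product of \<open>n\<close> linear factors.\<close>
lemma lagrange_basis_degree:
  assumes "i \<le> n"
  shows "degree (lagrange_basis xs n i) \<le> n"
proof -
  have "degree (lagrange_basis xs n i) \<le>
        sum (degree \<circ> (\<lambda>m. Polynomial.smult (inverse (xs i - xs m)) [:- xs m, 1:])) ({0..n} - {i})"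
    unfolding lagrange_basis_def by (rule degree_prod_sum_le) simp
  also have "\<dots> \<le> (\<Sum>m\<in>{0..n} - {i}. 1)"
    by (intro sum_mono) (simp add: degree_smult_le)
  also have "\<dots> = n" using assms by simp
  finally show ?thesis .
qed

lemma pderiv_sum: "pderiv (sum f A) = (\<Sum>x\<in>A. pderiv (f x))"
  using higher_pderiv_sum[of 1 f A] by simp

lemma lagrange_interpolates_monomial:
  assumes nodes: "\<forall>j<n. (xs :: nat \<Rightarrow> real) j < xs (Suc j)" and "q \<le> n"
  shows "(\<Sum>i\<in>{0..n}. Polynomial.smult (xs i ^ q) (lagrange_basis xs n i)) = monom 1 q"
proof -
  let ?L = "\<Sum>i\<in>{0..n}. Polynomial.smult (xs i ^ q) (lagrange_basis xs n i)"
  have "degree ?L \<le> n"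
    by (intro degree_sum_le) (auto intro: order.trans[OF degree_smult_le] lagrange_basis_degree)
  moreover have "degree (monom (1::real) q) \<le> n" using assms(2) by (simp add: degree_monom_eq)
  ultimately have "degree (?L - monom 1 q) \<le> n" by (meson degree_diff_le)
  moreover have "poly (?L - monom 1 q) (xs j) = 0" if j: "j \<le> n" for j
  proof -
    have "poly ?L (xs j) = (\<Sum>i\<in>{0..n}. xs i ^ q * (if i = j then 1 else 0))"
      by (simp add: poly_sum lagrange_basis_at_nodes[OF nodes _ j])
    also have "\<dots> = xs j ^ q" using j by (simp add: if_distrib[of "\<lambda>t. _ * t"] cong: if_cong)
    finally show ?thesis by (simp add: poly_monom)
  qed
  ultimately have "?L - monom 1 q = 0" by (rule poly_zero_at_nodes[OF nodes])
  then show ?thesis by simp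
qed

text \<open>The Vandermonde matrix of the nodes (row \<open>j\<close>: the monomials evaluated at
  \<open>xs j\<close>) and the matrix of differentiation in the monomial basis, which maps the
  coefficient of \<open>z^q\<close> to \<open>q\<close> times the coefficient of \<open>z^(q-1)\<close>.\<close>
definition vandermonde :: "(nat \<Rightarrow> real) \<Rightarrow> nat \<Rightarrow> real mat" where
  "vandermonde xs n = mat (n+1) (n+1) (\<lambda>(j,q). xs j ^ q)"

definition deriv_mat :: "nat \<Rightarrow> real mat" where
  "deriv_mat n = mat (n+1) (n+1) (\<lambda>(p,q). if q = Suc p then real q else 0)"

lemma vandermonde_carrier: "vandermonde xs n \<in> carrier_mat (n+1) (n+1)"
  by (simp add: vandermonde_def)

lemma deriv_mat_carrier: "deriv_mat n \<in> carrier_mat (n+1) (n+1)"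
  by (simp add: deriv_mat_def)

lemma Zhat_carrier: "Zhat xs n \<in> carrier_mat (n+1) (n+1)"
  by (simp add: Zhat_def)

text \<open>The same facts with \<open>n + 1\<close> in the simplifier's normal form \<open>Suc n\<close>.\<close>
lemmas carrier_Suc_simps[simp] =
  vandermonde_carrier[simplified] deriv_mat_carrier[simplified] Zhat_carrier[simplified]

lemma deriv_mat_strictly_upper: "upper_triangular (deriv_mat n)" "i < n+1 \<Longrightarrow> deriv_mat n $$ (i,i) = 0"
  by (auto simp: upper_triangular_def deriv_mat_def)

text \<open>The key one-dimensional fact: \<open>Zhat\<close> differentiates the interpolant, so in the
  monomial basis it acts as the differentiation matrix, \<open>Zhat V = V D\<close>.\<close>
lemma Zhat_vandermonde:
  assumes nodes: "\<forall>j<n. (xs :: nat \<Rightarrow> real) j < xs (Suc j)"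
  shows "Zhat xs n * vandermonde xs n = vandermonde xs n * deriv_mat n"
proof (rule eq_matI)
  fix j q assume "j < dim_row (vandermonde xs n * deriv_mat n)"
    and "q < dim_col (vandermonde xs n * deriv_mat n)"
  then have j: "j \<le> n" and q: "q \<le> n" by (auto simp: vandermonde_def deriv_mat_def)
  have "(Zhat xs n * vandermonde xs n) $$ (j,q) =
        (\<Sum>i\<in>{0..n}. poly (pderiv (lagrange_basis xs n i)) (xs j) * xs i ^ q)"
    using j q
    by (simp add: Zhat_def vandermonde_def scalar_prod_def atLeastLessThanSuc_atLeastAtMost)
  also have "\<dots> = poly (pderiv (\<Sum>i\<in>{0..n}. Polynomial.smult (xs i ^ q) (lagrange_basis xs n i))) (xs j)"
    by (simp add: pderiv_sum pderiv_smult poly_sum mult.commute)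
  also have "\<dots> = real q * xs j ^ (q - 1)"
    by (simp add: lagrange_interpolates_monomial[OF nodes q] pderiv_monom poly_monom)
  also have "\<dots> = (\<Sum>p\<in>{0..<n+1}. xs j ^ p * (if q = Suc p then real q else 0))"
    using q by (cases q) (auto simp: if_distrib[of "\<lambda>t. _ * t"] cong: if_cong)
  also have "\<dots> = (vandermonde xs n * deriv_mat n) $$ (j,q)"
    using j q by (simp add: vandermonde_def deriv_mat_def scalar_prod_def)
  finally show "(Zhat xs n * vandermonde xs n) $$ (j,q) = (vandermonde xs n * deriv_mat n) $$ (j,q)" .
qed (auto simp: Zhat_def vandermonde_def deriv_mat_def)

text \<open>The Vandermonde matrix of distinct nodes is invertible: a kernel vector would be
  the coefficient vector of a polynomial of degree at most \<open>n\<close> vanishing at all nodes.\<close>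
lemma vandermonde_det_nonzero:
  assumes nodes: "\<forall>j<n. (xs :: nat \<Rightarrow> real) j < xs (Suc j)"
  shows "det (vandermonde xs n) \<noteq> 0"
proof
  assume "det (vandermonde xs n) = 0"
  then obtain v where v: "v \<in> carrier_vec (n+1)" "v \<noteq> 0\<^sub>v (n+1)"
    and kernel: "vandermonde xs n *\<^sub>v v = 0\<^sub>v (n+1)"
    using det_0_iff_vec_prod_zero[OF vandermonde_carrier] by blast
  let ?p = "\<Sum>q\<in>{0..n}. monom (v $ q) q"
  have "degree ?p \<le> n"
    by (intro degree_sum_le) (auto intro: order.trans[OF degree_monom_le])
  moreover have "poly ?p (xs j) = 0" if j: "j \<le> n" for j
  proof -
    have "poly ?p (xs j) = (vandermonde xs n *\<^sub>v v) $ j"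
      using j v(1)
      by (simp add: poly_sum poly_monom vandermonde_def scalar_prod_def mult.commute
          atLeastLessThanSuc_atLeastAtMost)
    then show ?thesis using kernel j by simp
  qed
  ultimately have p0: "?p = 0" by (rule poly_zero_at_nodes[OF nodes])
  have "v $ q = 0" if "q \<le> n" for q
  proof -
    have "coeff ?p q = v $ q" using that by (simp add: coeff_sum)
    then show ?thesis using p0 by simp
  qed
  then have "v = 0\<^sub>v (n+1)" using v(1) by (intro eq_vecI) auto
  then show False using v(2) by contradiction
qed

section \<open>The tensor-product grid\<close>

definition vandermonde_kron :: "nat \<Rightarrow> (nat \<Rightarrow> nat) \<Rightarrow> (nat \<Rightarrow> nat \<Rightarrow> real) \<Rightarrow> real mat" where
  "vandermonde_kron d n x = kron_list (map (\<lambda>k. vandermonde (x k) (n k)) [1..<d + 1])"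

definition deriv_kron :: "nat \<Rightarrow> (nat \<Rightarrow> nat) \<Rightarrow> nat \<Rightarrow> real mat" where
  "deriv_kron d n \<alpha> = kron_list
     (map (\<lambda>k. if k = \<alpha> then deriv_mat (n k) else 1\<^sub>m (n k + 1)) [1..<d + 1])"

lemma grid_size: "(\<Prod>k\<leftarrow>[1..<d + 1]. n k + 1) = (\<Prod>k\<in>{1..d}. n k + 1)"
  by (subst prod.distinct_set_conv_list[symmetric]) (auto intro: prod.cong)

lemma grid_carriers:
  fixes d :: nat and n :: "nat \<Rightarrow> nat"
  defines "N \<equiv> \<Prod>k\<in>{1..d}. n k + 1"
  shows "Wmat d n x \<alpha> \<in> carrier_mat N N"
    and "vandermonde_kron d n x \<in> carrier_mat N N"
    and "deriv_kron d n \<alpha> \<in> carrier_mat N N"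
proof -
  have kron: "kron_list (map f [1..<d + 1]) \<in> carrier_mat N N"
    if "\<And>k. f k \<in> carrier_mat (n k + 1) (n k + 1)" for f
    unfolding N_def grid_size[symmetric] by (rule kron_list_carrier) (rule that)
  show "Wmat d n x \<alpha> \<in> carrier_mat N N" "vandermonde_kron d n x \<in> carrier_mat N N"
    "deriv_kron d n \<alpha> \<in> carrier_mat N N"
    unfolding Wmat_def vandermonde_kron_def deriv_kron_def
    by (rule kron; simp)+
qed

text \<open>The Kronecker product of Vandermonde matrices turns each \<open>W^(\<alpha>)\<close> into
  \<open>D^(\<alpha>)\<close>; this is \<open>Zhat V = V D\<close> applied in the \<open>\<alpha>\<close>-th factor.\<close>
lemma Wmat_intertwine:
  assumes nodes: "\<forall>k\<in>{1..d}. \<forall>j<n k. x k j < x k (Suc j)"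
  shows "Wmat d n x \<alpha> * vandermonde_kron d n x = vandermonde_kron d n x * deriv_kron d n \<alpha>"
proof -
  let ?ks = "[1..<d + 1]" and ?s = "\<lambda>k. n k + 1" and ?V = "\<lambda>k. vandermonde (x k) (n k)"
  let ?Z = "\<lambda>k. if k = \<alpha> then Zhat (x k) (n k) else 1\<^sub>m (n k + 1)"
  let ?D = "\<lambda>k. if k = \<alpha> then deriv_mat (n k) else 1\<^sub>m (n k + 1)"
  have factor: "?Z k * ?V k = ?V k * ?D k" if "k \<in> set ?ks" for k
  proof (cases "k = \<alpha>")
    case True
    then show ?thesis using that nodes Zhat_vandermonde[of "n k" "x k"] by auto
  next
    case False
    have V: "?V k \<in> carrier_mat (Suc (n k)) (Suc (n k))" by simp
    show ?thesis using False by (simp add: left_mult_one_mat[OF V] right_mult_one_mat[OF V])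
  qed
  have "Wmat d n x \<alpha> * vandermonde_kron d n x = kron_list (map (\<lambda>k. ?Z k * ?V k) ?ks)"
    unfolding Wmat_def vandermonde_kron_def
    by (rule kron_list_mult[where s = ?s]) auto
  also have "\<dots> = kron_list (map (\<lambda>k. ?V k * ?D k) ?ks)"
    using factor by (intro arg_cong[where f = kron_list] list.map_cong0)
  also have "\<dots> = vandermonde_kron d n x * deriv_kron d n \<alpha>"
    unfolding vandermonde_kron_def deriv_kron_def
    by (rule kron_list_mult[where s = ?s, symmetric]) auto
  finally show ?thesis .
qed

lemma deriv_kron_strictly_upper:
  assumes "\<alpha> \<in> {1..d}"
  shows "upper_triangular (deriv_kron d n \<alpha>)"
    and "i < (\<Prod>k\<in>{1..d}. n k + 1) \<Longrightarrow> deriv_kron d n \<alpha> $$ (i,i) = 0"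
proof -
  let ?D = "\<lambda>k. if k = \<alpha> then deriv_mat (n k) else 1\<^sub>m (n k + 1)"
  have D: "?D k \<in> carrier_mat (n k + 1) (n k + 1)" for k by simp
  show "upper_triangular (deriv_kron d n \<alpha>)"
    unfolding deriv_kron_def
    by (rule kron_list_upper_triangular[OF D]) (simp add: deriv_mat_strictly_upper)
  assume "i < (\<Prod>k\<in>{1..d}. n k + 1)"
  then have i: "i < (\<Prod>k\<leftarrow>[1..<d + 1]. n k + 1)" by (simp only: grid_size)
  show "deriv_kron d n \<alpha> $$ (i,i) = 0"
    unfolding deriv_kron_def
    by (rule kron_list_diag_zero[OF D _ _ i, of \<alpha>]) (use assms in \<open>auto simp: deriv_mat_strictly_upper\<close>)
qed

lemma vandermonde_kron_det_nonzero:
  assumes "\<forall>k\<in>{1..d}. \<forall>j<n k. x k j < x k (Suc j)"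
  shows "det (vandermonde_kron d n x) \<noteq> 0"
  unfolding vandermonde_kron_def
  by (rule kron_list_det_nonzero[where s = "\<lambda>k. n k + 1"])
     (use assms in \<open>auto intro!: vandermonde_det_nonzero\<close>)

lemma eval_at_W_poly_at:
  "eval_at_W d n x P = poly_at (\<Prod>k\<in>{1..d}. n k + 1) (Wmat d n x) [1..<d + 1] P"
  unfolding eval_at_W_def poly_at_def monomial_at_def monoW_def ..

text \<open>The determinant formula: \<open>det P(W) = c^N\<close> for the constant term \<open>c\<close> of \<open>P\<close>,
  because \<open>P(W)\<close> is similar to the triangular matrix \<open>P(D)\<close>.\<close>
lemma det_eval_at_W:
  fixes d :: nat and n :: "nat \<Rightarrow> nat"
  assumes nodes: "\<forall>k\<in>{1..d}. \<forall>j<n k. x k j < x k (Suc j)"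
    and vars: "\<forall>m\<in>Poly_Mapping.keys P. Poly_Mapping.keys m \<subseteq> {1..d}"
  defines "N \<equiv> \<Prod>k\<in>{1..d}. n k + 1"
  shows "det (eval_at_W d n x P) = Poly_Mapping.lookup P 0 ^ N"
proof -
  define ks where "ks = [1..<d + 1]"
  have set_ks: "set ks = {1..d}" unfolding ks_def by auto
  let ?K = "vandermonde_kron d n x"
  let ?E = "poly_at N (Wmat d n x) ks P" and ?T = "poly_at N (deriv_kron d n) ks P"
  have W: "Wmat d n x \<alpha> \<in> carrier_mat N N" and K: "?K \<in> carrier_mat N N"
    and D: "deriv_kron d n \<alpha> \<in> carrier_mat N N" for \<alpha>
    unfolding N_def by (rule grid_carriers)+
  have carriers: "?E \<in> carrier_mat N N" "?T \<in> carrier_mat N N"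
    by (auto simp: poly_at_def)
  have sim: "?E * ?K = ?K * ?T"
    by (rule intertwine_poly_at) (auto simp: W K D Wmat_intertwine[OF nodes])
  have "upper_triangular ?T \<and> (\<forall>i<N. ?T $$ (i,i) = Poly_Mapping.lookup P 0)"
    using poly_at_strictly_upper[of ks "deriv_kron d n" N P] D vars
      deriv_kron_strictly_upper[where d = d and n = n]
    unfolding set_ks N_def by auto
  then have "det ?T = Poly_Mapping.lookup P 0 ^ N"
    by (intro det_upper_triangular_const_diag[OF carriers(2)]) auto
  moreover have "det ?E * det ?K = det ?K * det ?T"
    using arg_cong[OF sim, of det] det_mult carriers K by metis
  ultimately show ?thesis
    using vandermonde_kron_det_nonzero[OF nodes] by (simp add: eval_at_W_poly_at N_def ks_def)
qed

theorem mainTheorem10: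
  fixes d :: nat and n :: "nat \<Rightarrow> nat" and a b :: "nat \<Rightarrow> real"
    and x :: "nat \<Rightarrow> nat \<Rightarrow> real"
    and P :: "(nat \<Rightarrow>\<^sub>0 nat) \<Rightarrow>\<^sub>0 real"
  assumes "\<forall>k\<in>{1..d}. n k \<ge> 1"
    and "\<forall>k\<in>{1..d}. x k 0 = a k \<and> x k (n k) = b k"
    and "\<forall>k\<in>{1..d}. \<forall>j<n k. x k j < x k (Suc j)"
    and "\<forall>m\<in>Poly_Mapping.keys P. Poly_Mapping.keys m \<subseteq> {1..d}"
  shows "vec_space.rank (\<Prod>k\<in>{1..d}. n k + 1) (eval_at_W d n x P)
           = (\<Prod>k\<in>{1..d}. n k + 1)
         \<longleftrightarrow> Poly_Mapping.lookup P 0 \<noteq> 0"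
proof -
  let ?N = "\<Prod>k\<in>{1..d}. n k + 1"
  have "eval_at_W d n x P \<in> carrier_mat ?N ?N" by (simp add: eval_at_W_def)
  then have "vec_space.rank ?N (eval_at_W d n x P) = ?N \<longleftrightarrow> det (eval_at_W d n x P) \<noteq> 0"
    by (simp add: vec_space.det_rank_iff)
  also have "\<dots> \<longleftrightarrow> Poly_Mapping.lookup P 0 \<noteq> 0"
    using det_eval_at_W[OF assms(3,4)] by (simp add: prod_pos)
  finally show ?thesis .
qed

end
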